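(* For every integer $d \geq 2$, $$\overline{\bigcup_{s\geq 1}\mathsf U_{d,s}}=\mathsf B_d,$$ where the closure is taken in $\mathbb R^{d\times d}$.
   Context: $\mathsf B_d$ denotes the set of $d\times d$ bistochastic matrices (real matrices with non-negative entries whose rows and columns each sum to $1$). For integers $d\ge 2$, $s\ge 1$, a matrix $U\in\mathcal U(ds)$ (the group of $ds\times ds$ complex unitary matrices) is viewed as a $d\times d$ block matrix with blocks $U_{ij}\in M_s(\mathbb C)$, $i,j\in\{1,\dots,d\}$. Define $\phi_{d,s}(U)=\big(\tfrac1s\|U_{ij}\|_F^2\big)_{i,j=1}^d$, where $\|X\|_F=\operatorname{Tr}(XX^* )^{1/2}$ is the Frobenius norm, and $\mathsf U_{d,s}:=\phi_{d,s}(\mathcal U(ds))$ (the generalized unistochastic matrices). *)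

theory Defs
  imports "HOL-Analysis.Analysis"
begin

text \<open>Real d x d matrices are modelled as real^'d^'d, where d = CARD('d).\<close>

definition bistochastic :: "(real^'d^'d) set" where
  "bistochastic = {B. (\<forall>i j. 0 \<le> B$i$j) \<and> (\<forall>i. (\<Sum>j\<in>UNIV. B$i$j) = 1)
                      \<and> (\<forall>j. (\<Sum>i\<in>UNIV. B$i$j) = 1)}"

text \<open>An n x n complex matrix is represented by its entries U a b for a, b < n.
  Unitary: U U^* = I and U^* U = I.\<close>

definition unitary_mat :: "nat \<Rightarrow> (nat \<Rightarrow> nat \<Rightarrow> complex) \<Rightarrow> bool" where
  "unitary_mat n U \<longleftrightarrow>
     (\<forall>a<n. \<forall>b<n. (\<Sum>c<n. U a c * cnj (U b c)) = (if a = b then 1 else 0)) \<and>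
     (\<forall>a<n. \<forall>b<n. (\<Sum>c<n. cnj (U c a) * U c b) = (if a = b then 1 else 0))"

definition idx :: "'d::finite \<Rightarrow> nat" where
  "idx = (SOME f. bij_betw f (UNIV :: 'd set) {..<CARD('d)})"

text \<open>phi_{d,s}(U): entry (i,j) is (1/s) ||U_ij||_F^2, where the block U_ij
  consists of the entries U (idx i * s + a) (idx j * s + b), a, b < s.\<close>

definition phi :: "nat \<Rightarrow> (nat \<Rightarrow> nat \<Rightarrow> complex) \<Rightarrow> real^'d::finite^'d" where
  "phi s U = (\<chi> i j. (1 / real s) *
      (\<Sum>a<s. \<Sum>b<s. (cmod (U (idx i * s + a) (idx j * s + b)))\<^sup>2))"

definition unistochastic_gen :: "nat \<Rightarrow> (real^'d::finite^'d) set" where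
  "unistochastic_gen s = phi s ` {U. unitary_mat (CARD('d) * s) U}"

end

theory Submission
  imports Defs
begin

(* Every phi_{d,s}(U) is bistochastic, since the rows and columns of a unitary matrix are unit
   vectors, and the bistochastic matrices form a closed set; this gives one inclusion.

   Conversely, fix B bistochastic and s, and let N_ij = floor (s B_ij), whose row and column sums
   are at most s. Cut the i-th block of s row indices into consecutive intervals of lengths
   N_i1, N_i2, ..., and the j-th block of s column indices into consecutive intervals of lengths
   N_1j, N_2j, .... Some permutation of {0..<ds} sends the (i,j)-th row interval into the (i,j)-th
   column interval. Its permutation matrix U is unitary and phi_{d,s}(U) = M/s, where M_ij counts
   the rows of block i sent into block j. Then M_ij >= N_ij > s B_ij - 1 and the rows of M sum to
   s, so every entry of M/s is within d/s of B. *)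

lemma bij_betw_idx: "bij_betw (idx :: 'd::finite \<Rightarrow> nat) UNIV {..<CARD('d)}"
proof -
  have "\<exists>f. bij_betw f (UNIV :: 'd set) {..<CARD('d)}"
    using ex_bij_betw_finite_nat[of "UNIV :: 'd set"] by (simp add: atLeast0LessThan)
  then show ?thesis unfolding idx_def by (rule someI_ex)
qed

lemma idx_less: "idx (i :: 'd::finite) < CARD('d)"
  using bij_betwE[OF bij_betw_idx] by blast

lemma block_index_less: "i < d \<Longrightarrow> b < s \<Longrightarrow> i * s + b < d * (s::nat)"
  using mult_le_mono1[of "Suc i" d s] by simp

lemma sum_blocks:
  "(\<Sum>j\<in>(UNIV::'d::finite set). \<Sum>b<s. g (idx j * s + b)) = (\<Sum>c<CARD('d) * s. g c)"
proof -
  have "(\<Sum>j\<in>(UNIV::'d set). \<Sum>b<s. g (idx j * s + b)) = (\<Sum>i<CARD('d). \<Sum>b<s. g (i * s + b))"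
    by (rule sum.reindex_bij_betw[OF bij_betw_idx])
  also have "\<dots> = (\<Sum>i<CARD('d). sum g {i * s..<i * s + s})"
    by (simp add: sum.shift_bounds_nat_ivl[of g 0 _ s, simplified] add.commute atLeast0LessThan)
  also have "\<dots> = (\<Sum>c<CARD('d) * s. g c)"
    by (rule sum.nat_group)
  finally show ?thesis .
qed

lemma unitary_mat_row_norm:
  assumes "unitary_mat n U" "a < n"
  shows "(\<Sum>c<n. (cmod (U a c))\<^sup>2) = 1"
proof -
  have "(\<Sum>c<n. U a c * cnj (U a c)) = 1" using assms unfolding unitary_mat_def by auto
  then have "complex_of_real (\<Sum>c<n. (cmod (U a c))\<^sup>2) = 1"
    by (simp only: of_real_sum complex_norm_square)
  then show ?thesis by (metis of_real_eq_1_iff)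
qed

lemma unitary_mat_adjoint: "unitary_mat n U \<Longrightarrow> unitary_mat n (\<lambda>a b. cnj (U b a))"
  by (simp add: unitary_mat_def mult.commute)

lemma phi_adjoint: "(phi s (\<lambda>a b. cnj (U b a)) :: real^'d::finite^'d) $ i $ j = phi s U $ j $ i"
  unfolding phi_def vec_lambda_beta complex_mod_cnj by (subst sum.swap) (rule refl)

lemma phi_row_sum:
  assumes "s > 0" "unitary_mat (CARD('d::finite) * s) U"
  shows "(\<Sum>j\<in>UNIV. (phi s U :: real^'d^'d) $ i $ j) = 1"
proof -
  have "(\<Sum>j\<in>UNIV. (phi s U :: real^'d^'d) $ i $ j)
      = (1 / real s) *
        (\<Sum>a<s. \<Sum>j\<in>(UNIV::'d set). \<Sum>b<s. (cmod (U (idx i * s + a) (idx j * s + b)))\<^sup>2)"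
    unfolding phi_def by (simp add: sum_distrib_left sum.swap[of _ "UNIV::'d set"])
  also have "\<dots> = (1 / real s) * (\<Sum>a<s. \<Sum>c<CARD('d) * s. (cmod (U (idx i * s + a) c))\<^sup>2)"
    by (intro arg_cong[where f="\<lambda>x. _ * x"] sum.cong refl sum_blocks)
  also have "\<dots> = (1 / real s) * (\<Sum>a<s. 1)"
    using assms(2) by (simp add: unitary_mat_row_norm block_index_less idx_less)
  finally show ?thesis using assms(1) by simp
qed

lemma phi_bistochastic:
  assumes "s > 0" "unitary_mat (CARD('d::finite) * s) U"
  shows "(phi s U :: real^'d^'d) \<in> bistochastic"
proof -
  have "(\<Sum>i\<in>UNIV. (phi s U :: real^'d^'d) $ i $ j) = 1" for j
    using phi_row_sum[OF assms(1) unitary_mat_adjoint[OF assms(2)], of j]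
    by (simp add: phi_adjoint)
  moreover have "0 \<le> (phi s U :: real^'d^'d) $ i $ j" for i j
    by (simp add: phi_def sum_nonneg)
  ultimately show ?thesis
    using phi_row_sum[OF assms] by (simp add: bistochastic_def)
qed

lemma closed_bistochastic: "closed (bistochastic :: (real^'d::finite^'d) set)"
  unfolding bistochastic_def
  by (intro closed_Collect_conj closed_Collect_all closed_Collect_le closed_Collect_eq
      continuous_intros)

lemma unitary_mat_permutation:
  assumes f: "bij_betw f {..<n} {..<n}"
  shows "unitary_mat n (\<lambda>a b. if f a = b then 1 else 0)"
proof -
  have rows: "(\<Sum>c<n. (if f a = c then 1 else 0) * cnj (if f b = c then 1 else 0))
      = (if a = b then 1 else (0::complex))" if "a < n" "b < n" for a b
  proof -
    have "f a < n" "f a = f b \<longleftrightarrow> a = b"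
      using f that by (auto simp: bij_betw_def inj_on_def)
    then have "(if f a = c then 1 else 0) * cnj (if f b = c then 1 else 0)
        = (if c = f a then if a = b then 1 else 0 else (0::complex))" for c
      by auto
    with \<open>f a < n\<close> show ?thesis by (simp add: sum.delta')
  qed
  have cols: "(\<Sum>c<n. cnj (if f c = a then 1 else 0) * (if f c = b then 1 else 0))
      = (if a = b then 1 else (0::complex))" if "a < n" "b < n" for a b
  proof -
    have "(\<Sum>c<n. cnj (if f c = a then 1 else 0) * (if f c = b then 1 else 0))
        = (\<Sum>y<n. cnj (if y = a then 1 else 0) * (if y = b then 1 else (0::complex)))"
      by (rule sum.reindex_bij_betw[OF f])
    also have "\<dots> = (\<Sum>y<n. if y = a then if a = b then 1 else 0 else 0)"
      by (rule sum.cong) auto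
    finally show ?thesis using \<open>a < n\<close> by simp
  qed
  show ?thesis unfolding unitary_mat_def using rows cols by blast
qed

definition block_count :: "nat \<Rightarrow> (nat \<Rightarrow> nat) \<Rightarrow> nat \<Rightarrow> nat \<Rightarrow> nat" where
  "block_count s f i j = card {a\<in>{..<s}. f (i * s + a) div s = j}"

lemma sum_indicator_block:
  assumes "(s::nat) > 0"
  shows "(\<Sum>b<s. if x = j * s + b then 1 else (0::real)) = (if x div s = j then 1 else 0)"
proof (cases "x div s = j")
  case True
  then have "x = j * s + b \<longleftrightarrow> b = x mod s" for b
    by (metis div_mult_mod_eq mult.commute add_left_cancel)
  then show ?thesis using True assms by (simp add: sum.delta)
next
  case False
  then have "x \<noteq> j * s + b" if "b < s" for b using that by auto
  then show ?thesis using False by simp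
qed

lemma phi_permutation_matrix:
  assumes "s > 0"
  shows "(phi s (\<lambda>a b. if f a = b then 1 else 0) :: real^'d::finite^'d) $ i $ j
    = block_count s f (idx i) (idx j) / s"
proof -
  have square: "(cmod (if P then 1 else 0))\<^sup>2 = (if P then 1 else (0::real))" for P
    by simp
  have "(phi s (\<lambda>a b. if f a = b then 1 else 0) :: real^'d^'d) $ i $ j
      = (1 / s) * (\<Sum>a<s. if f (idx i * s + a) div s = idx j then 1 else 0)"
    unfolding phi_def using assms by (simp only: square sum_indicator_block vec_lambda_beta)
  also have "\<dots> = block_count s f (idx i) (idx j) / s"
    by (simp add: block_count_def sum.If_cases Int_def)
  finally show ?thesis .
qed

lemma sum_block_count:
  assumes "f ` {..<d * s} \<subseteq> {..<d * s}" "i < d"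
  shows "(\<Sum>j<d. block_count s f i j) = s"
proof -
  define A where "A j = {a\<in>{..<s}. f (i * s + a) div s = j}" for j
  have "f (i * s + a) div s < d" if "a < s" for a
    using assms block_index_less[OF \<open>i < d\<close> that] by (auto intro: less_mult_imp_div_less)
  then have "(\<Union>j<d. A j) = {..<s}"
    by (auto simp: A_def)
  moreover have "card (\<Union>j<d. A j) = (\<Sum>j<d. card (A j))"
    by (rule card_UN_disjoint) (auto simp: A_def)
  ultimately show ?thesis
    unfolding block_count_def A_def[symmetric] by simp
qed

lemma bij_betw_extend_to_permutation:
  assumes "finite X" "A \<subseteq> X" "B \<subseteq> X" "bij_betw h A B"
  shows "\<exists>f. bij_betw f X X \<and> (\<forall>x\<in>A. f x = h x)"
proof -
  have "card (X - A) = card (X - B)"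
    using assms by (simp add: card_Diff_subset finite_subset bij_betw_same_card)
  then obtain g where "bij_betw g (X - A) (X - B)"
    using finite_same_card_bij[of "X - A" "X - B"] assms(1) by auto
  then have "bij_betw (\<lambda>x. if x \<in> A then h x else g x) (A \<union> (X - A)) (B \<union> (X - B))"
    by (intro bij_betw_disjoint_Un[OF assms(4)]) auto
  moreover have "A \<union> (X - A) = X" "B \<union> (X - B) = X"
    using assms by auto
  ultimately show ?thesis by auto
qed

lemma bij_betw_disjoint_families:
  assumes "disjoint_family_on I K" "disjoint_family_on J K"
    and "\<And>k. k \<in> K \<Longrightarrow> finite (I k)" "\<And>k. k \<in> K \<Longrightarrow> finite (J k)"
    and "\<And>k. k \<in> K \<Longrightarrow> card (I k) = card (J k)"
  shows "\<exists>h. bij_betw h (\<Union>k\<in>K. I k) (\<Union>k\<in>K. J k) \<and> (\<forall>k\<in>K. \<forall>x\<in>I k. h x \<in> J k)"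
proof -
  have "\<forall>k\<in>K. \<exists>h. bij_betw h (I k) (J k)"
    using assms(3-5) by (intro ballI finite_same_card_bij) auto
  then obtain h where h: "\<And>k. k \<in> K \<Longrightarrow> bij_betw (h k) (I k) (J k)"
    by (metis bchoice)
  define g where "g x = h (SOME k. k \<in> K \<and> x \<in> I k) x" for x
  have g_eq: "g x = h k x" if "k \<in> K" "x \<in> I k" for k x
  proof -
    have "(SOME k. k \<in> K \<and> x \<in> I k) = k"
      using that assms(1) by (intro some_equality) (auto simp: disjoint_family_on_def)
    then show ?thesis by (simp add: g_def)
  qed
  have g: "bij_betw g (I k) (J k)" if "k \<in> K" for k
    using bij_betw_cong[of "I k" g "h k" "J k"] g_eq[OF that] h[OF that] by blast
  then have "bij_betw g (\<Union>k\<in>K. I k) (\<Union>k\<in>K. J k)"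
    by (rule bij_betw_UNION_disjoint[OF assms(2)])
  with g show ?thesis by (auto simp: bij_betw_def)
qed

definition block_interval :: "nat \<Rightarrow> nat \<Rightarrow> (nat \<Rightarrow> nat) \<Rightarrow> nat \<Rightarrow> nat set" where
  "block_interval s u P v = {u * s + (\<Sum>w<v. P w) ..< u * s + (\<Sum>w<Suc v. P w)}"

lemma card_block_interval: "card (block_interval s u P v) = P v"
  by (simp add: block_interval_def)

lemma block_interval_subset_block:
  assumes "(\<Sum>w<d. P w) \<le> s" "v < d"
  shows "block_interval s u P v \<subseteq> {u * s..<u * s + s}"
proof -
  have "(\<Sum>w<Suc v. P w) \<le> (\<Sum>w<d. P w)"
    using assms(2) by (intro sum_mono2) auto
  then show ?thesis
    using assms(1) by (auto simp: block_interval_def)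
qed

lemma div_eq_if_in_block: "x \<in> {u * s..<u * s + s} \<Longrightarrow> x div s = (u::nat)"
  by (intro div_nat_eqI) (auto simp: mult.commute)

lemma block_subset_lessThan: "u < d \<Longrightarrow> {u * s..<u * s + s} \<subseteq> {..<d * (s::nat)}"
  using mult_le_mono1[of "Suc u" d s] by auto

lemma block_interval_disjoint:
  assumes "v \<noteq> v'"
  shows "block_interval s u P v \<inter> block_interval s u P v' = {}"
proof -
  have "block_interval s u P v \<inter> block_interval s u P v' = {}" if "v < v'" for v v'
  proof -
    have "(\<Sum>w<Suc v. P w) \<le> (\<Sum>w<v'. P w)"
      using that by (intro sum_mono2) auto
    then show ?thesis by (auto simp: block_interval_def)
  qed
  with assms show ?thesis
    by (cases "v < v'") (auto simp: Int_commute dest: linorder_neqE_nat)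
qed

lemma disjoint_family_block_intervals:
  assumes "\<And>u. u < d \<Longrightarrow> (\<Sum>w<d. P u w) \<le> s"
  shows "disjoint_family_on (\<lambda>(u, v). block_interval s u (P u) v) ({..<d} \<times> {..<d})"
unfolding disjoint_family_on_def
proof (intro ballI impI)
  fix k k' assume "k \<in> {..<d} \<times> {..<d}" "k' \<in> {..<d} \<times> {..<d}" "k \<noteq> k'"
  then obtain u v u' v' where k: "k = (u, v)" "k' = (u', v')"
    and uv: "u < d" "v < d" "u' < d" "v' < d" "(u, v) \<noteq> (u', v')"
    by auto
  show "(\<lambda>(u, v). block_interval s u (P u) v) k \<inter> (\<lambda>(u, v). block_interval s u (P u) v) k' = {}"
  proof (cases "u = u'")
    case True
    then show ?thesis
      using k uv block_interval_disjoint[of v v' s u "P u"] by auto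
  next
    case False
    have "x div s = u" "x div s = u'"
      if "x \<in> block_interval s u (P u) v" "x \<in> block_interval s u' (P u') v'" for x
      using that block_interval_subset_block[OF assms] uv div_eq_if_in_block by blast+
    with False k show ?thesis by auto
  qed
qed

lemma exists_permutation_maps_block_intervals:
  fixes N :: "nat \<Rightarrow> nat \<Rightarrow> nat"
  assumes rows: "\<And>i. i < d \<Longrightarrow> (\<Sum>j<d. N i j) \<le> s"
    and cols: "\<And>j. j < d \<Longrightarrow> (\<Sum>i<d. N i j) \<le> s"
  shows "\<exists>f. bij_betw f {..<d * s} {..<d * s} \<and>
    (\<forall>i<d. \<forall>j<d. f ` block_interval s i (N i) j \<subseteq> block_interval s j (\<lambda>i. N i j) i)"
proof -
  define K where "K = {..<d} \<times> {..<d}"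
  define I where "I = (\<lambda>(i, j). block_interval s i (N i) j)"
  define J where "J = (\<lambda>(i, j). block_interval s j (\<lambda>i. N i j) i)"
  have I_disjoint: "disjoint_family_on I K"
    unfolding I_def K_def using rows by (rule disjoint_family_block_intervals)
  have J_disjoint: "disjoint_family_on J K"
  proof -
    have "disjoint_family_on (\<lambda>(j, i). block_interval s j (\<lambda>i. N i j) i) K"
      unfolding K_def using cols by (rule disjoint_family_block_intervals)
    then show ?thesis
      unfolding J_def K_def disjoint_family_on_def by fastforce
  qed
  have "finite (I k)" "finite (J k)" for k
    by (cases k, simp add: I_def J_def block_interval_def)+
  moreover have "card (I k) = card (J k)" for k
    by (cases k) (simp add: I_def J_def card_block_interval)
  ultimately obtain h where h: "bij_betw h (\<Union>k\<in>K. I k) (\<Union>k\<in>K. J k)"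
    and h_IJ: "\<forall>k\<in>K. \<forall>x\<in>I k. h x \<in> J k"
    using bij_betw_disjoint_families[OF I_disjoint J_disjoint] by metis
  have "I (i, j) \<subseteq> {..<d * s}" "J (i, j) \<subseteq> {..<d * s}" if "i < d" "j < d" for i j
    unfolding I_def J_def
    using order_trans[OF block_interval_subset_block[OF rows[OF that(1)] that(2)]
        block_subset_lessThan[OF that(1)]]
      order_trans[OF block_interval_subset_block[OF cols[OF that(2)] that(1)]
        block_subset_lessThan[OF that(2)]]
    by simp_all
  then have "(\<Union>k\<in>K. I k) \<subseteq> {..<d * s}" "(\<Union>k\<in>K. J k) \<subseteq> {..<d * s}"
    unfolding K_def by blast+
  then obtain f where f: "bij_betw f {..<d * s} {..<d * s}"
    and f_h: "\<forall>x\<in>(\<Union>k\<in>K. I k). f x = h x"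
    using bij_betw_extend_to_permutation[OF _ _ _ h] by blast
  have "f ` I (i, j) \<subseteq> J (i, j)" if "i < d" "j < d" for i j
    using f_h h_IJ that unfolding K_def by fastforce
  with f show ?thesis
    unfolding I_def J_def by blast
qed

lemma exists_permutation_block_count_ge:
  fixes N :: "nat \<Rightarrow> nat \<Rightarrow> nat"
  assumes rows: "\<And>i. i < d \<Longrightarrow> (\<Sum>j<d. N i j) \<le> s"
    and cols: "\<And>j. j < d \<Longrightarrow> (\<Sum>i<d. N i j) \<le> s"
  shows "\<exists>f. bij_betw f {..<d * s} {..<d * s} \<and> (\<forall>i<d. \<forall>j<d. N i j \<le> block_count s f i j)"
proof -
  obtain f where f: "bij_betw f {..<d * s} {..<d * s}"
    and f_maps: "\<forall>i<d. \<forall>j<d. f ` block_interval s i (N i) j \<subseteq> block_interval s j (\<lambda>i. N i j) i"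
    using exists_permutation_maps_block_intervals[OF rows cols] by blast
  have "N i j \<le> block_count s f i j" if "i < d" "j < d" for i j
  proof -
    define r where "r = (\<Sum>w<j. N i w)"
    have "{r..<r + N i j} \<subseteq> {a\<in>{..<s}. f (i * s + a) div s = j}"
    proof
      fix a assume "a \<in> {r..<r + N i j}"
      then have a: "i * s + a \<in> block_interval s i (N i) j"
        by (simp add: block_interval_def r_def)
      then have "a < s"
        using block_interval_subset_block[OF rows[OF that(1)] that(2), of i] by fastforce
      moreover have "f (i * s + a) \<in> block_interval s j (\<lambda>i. N i j) i"
        using a f_maps that by blast
      then have "f (i * s + a) div s = j"
        using block_interval_subset_block[OF cols[OF that(2)] that(1)] div_eq_if_in_block by blast
      ultimately show "a \<in> {a\<in>{..<s}. f (i * s + a) div s = j}"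
        by simp
    qed
    then have "card {r..<r + N i j} \<le> block_count s f i j"
      unfolding block_count_def by (intro card_mono) auto
    then show ?thesis by simp
  qed
  with f show ?thesis by blast
qed

lemma abs_diff_le_of_sum_eq:
  fixes x y :: "'a \<Rightarrow> real"
  assumes "finite S" "j \<in> S" "(\<Sum>w\<in>S. y w) = (\<Sum>w\<in>S. x w)"
    and lower: "\<And>w. w \<in> S \<Longrightarrow> x w - 1 \<le> y w"
  shows "\<bar>y j - x j\<bar> \<le> card S"
proof -
  have "(\<Sum>w\<in>S. y w - x w) = 0"
    using assms(3) by (simp add: sum_subtractf)
  then have "y j - x j = (\<Sum>w\<in>S - {j}. x w - y w)"
    using assms(1,2) by (simp add: sum.remove sum_subtractf)
  also have "\<dots> \<le> (\<Sum>w\<in>S - {j}. 1)"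
    by (intro sum_mono) (auto dest: lower)
  also have "\<dots> \<le> card S"
    by (simp add: card_Diff1_le)
  finally have "y j - x j \<le> card S" .
  moreover have "1 \<le> card S"
    using assms(1,2) card_0_eq[OF assms(1)] by fastforce
  ultimately show ?thesis
    using lower[OF assms(2)] by linarith
qed

lemma exists_permutation_block_count_near:
  fixes M :: "nat \<Rightarrow> nat \<Rightarrow> real"
  assumes nonneg: "\<And>i j. i < d \<Longrightarrow> j < d \<Longrightarrow> 0 \<le> M i j"
    and rows: "\<And>i. i < d \<Longrightarrow> (\<Sum>j<d. M i j) = 1"
    and cols: "\<And>j. j < d \<Longrightarrow> (\<Sum>i<d. M i j) = 1"
  shows "\<exists>f. bij_betw f {..<d * s} {..<d * s} \<and>
    (\<forall>i<d. \<forall>j<d. \<bar>block_count s f i j - s * M i j\<bar> \<le> d)"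
proof -
  define N where "N i j = nat \<lfloor>s * M i j\<rfloor>" for i j
  have N_le: "real (N i j) \<le> s * M i j" and N_gt: "s * M i j - 1 < N i j"
    if "i < d" "j < d" for i j
    using nonneg[OF that] unfolding N_def by (simp, linarith)
  have "(\<Sum>j<d. N i j) \<le> s" if "i < d" for i
  proof -
    have "(\<Sum>j<d. real (N i j)) \<le> (\<Sum>j<d. s * M i j)"
      using that by (intro sum_mono N_le) auto
    then show ?thesis
      using rows[OF that] by (simp flip: of_nat_sum sum_distrib_left)
  qed
  moreover have "(\<Sum>i<d. N i j) \<le> s" if "j < d" for j
  proof -
    have "(\<Sum>i<d. real (N i j)) \<le> (\<Sum>i<d. s * M i j)"
      using that by (intro sum_mono N_le) auto
    then show ?thesis
      using cols[OF that] by (simp flip: of_nat_sum sum_distrib_left)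
  qed
  ultimately obtain f where f: "bij_betw f {..<d * s} {..<d * s}"
    and N_count: "\<forall>i<d. \<forall>j<d. N i j \<le> block_count s f i j"
    using exists_permutation_block_count_ge by blast
  have "\<bar>block_count s f i j - s * M i j\<bar> \<le> d" if "i < d" "j < d" for i j
  proof -
    have "(\<Sum>w<d. real (block_count s f i w)) = (\<Sum>w<d. s * M i w)"
      using sum_block_count[of f d s i] f that(1) rows[OF that(1)]
      by (simp add: bij_betw_def flip: of_nat_sum sum_distrib_left)
    moreover have "s * M i w - 1 \<le> block_count s f i w" if "w < d" for w
      using N_gt[OF \<open>i < d\<close> that] N_count \<open>i < d\<close> that by force
    ultimately show ?thesis
      using abs_diff_le_of_sum_eq[where S="{..<d}" and y="\<lambda>w. block_count s f i w"
          and x="\<lambda>w. s * M i w"] that by simp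
  qed
  with f show ?thesis by blast
qed

lemma unistochastic_gen_approximates:
  fixes B :: "real^'d::finite^'d"
  assumes B: "B \<in> bistochastic" and "s > 0"
  shows "\<exists>A\<in>unistochastic_gen s. \<forall>i j. \<bar>A $ i $ j - B $ i $ j\<bar> \<le> CARD('d) / s"
proof -
  define e where "e = inv_into UNIV (idx :: 'd \<Rightarrow> nat)"
  have e_idx: "e (idx x) = x" for x
    using bij_betw_idx[where 'd='d] unfolding e_def by (simp add: bij_betw_def)
  have sum_e: "(\<Sum>j<CARD('d). g (e j)) = (\<Sum>x\<in>UNIV. g x)" for g :: "'d \<Rightarrow> real"
    using sum.reindex_bij_betw[OF bij_betw_idx[where 'd='d], of "\<lambda>j. g (e j)"]
    by (simp add: e_idx)
  obtain f where f: "bij_betw f {..<CARD('d) * s} {..<CARD('d) * s}"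
    and near: "\<forall>i<CARD('d). \<forall>j<CARD('d). \<bar>block_count s f i j - s * B $ e i $ e j\<bar> \<le> CARD('d)"
    using exists_permutation_block_count_near[of "CARD('d)" "\<lambda>i j. B $ e i $ e j" s] B
      sum_e[of "\<lambda>y. B $ _ $ y"] sum_e[of "\<lambda>x. B $ x $ _"]
    by (auto simp: bistochastic_def)
  define A where "A = (phi s (\<lambda>a b. if f a = b then 1 else 0) :: real^'d^'d)"
  have "A \<in> unistochastic_gen s"
    unfolding A_def unistochastic_gen_def using unitary_mat_permutation[OF f] by blast
  moreover have "\<bar>A $ x $ y - B $ x $ y\<bar> \<le> CARD('d) / s" for x y
  proof -
    have "A $ x $ y - B $ x $ y = (block_count s f (idx x) (idx y) - s * B $ x $ y) / s"
      using \<open>s > 0\<close> by (simp add: A_def phi_permutation_matrix field_simps)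
    then have "\<bar>A $ x $ y - B $ x $ y\<bar> = \<bar>block_count s f (idx x) (idx y) - s * B $ x $ y\<bar> / s"
      by simp
    also have "\<dots> \<le> CARD('d) / s"
      using near[rule_format, OF idx_less idx_less, of x y]
      by (intro divide_right_mono) (simp_all add: e_idx)
    finally show ?thesis .
  qed
  ultimately show ?thesis by blast
qed

lemma dist_le_of_entrywise_le:
  fixes A B :: "real^'n::finite^'m::finite" and c :: real
  assumes "\<And>i j. \<bar>A $ i $ j - B $ i $ j\<bar> \<le> c"
  shows "dist A B \<le> real CARD('m) * real CARD('n) * c"
proof -
  have "dist A B = norm (A - B)"
    by (simp add: dist_norm)
  also have "\<dots> \<le> (\<Sum>i\<in>UNIV. norm ((A - B) $ i))"
    unfolding norm_vec_def by (rule L2_set_le_sum) simp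
  also have "\<dots> \<le> (\<Sum>i\<in>(UNIV::'m set). \<Sum>j\<in>(UNIV::'n set). \<bar>A $ i $ j - B $ i $ j\<bar>)"
    by (intro sum_mono order.trans[OF norm_le_l1_cart]) simp
  also have "\<dots> \<le> (\<Sum>i\<in>(UNIV::'m set). \<Sum>j\<in>(UNIV::'n set). c)"
    by (intro sum_mono assms)
  finally show ?thesis by simp
qed

lemma bistochastic_approachable:
  fixes B :: "real^'d::finite^'d"
  assumes B: "B \<in> bistochastic" and "\<epsilon> > 0"
  shows "\<exists>s\<ge>1. \<exists>A\<in>unistochastic_gen s. dist A B < \<epsilon>"
proof -
  define d where "d = real CARD('d)"
  obtain s :: nat where s: "d ^ 3 / \<epsilon> < s"
    using reals_Archimedean2 by blast
  have "0 < d ^ 3 / \<epsilon>"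
    using \<open>\<epsilon> > 0\<close> by (simp add: d_def)
  then have "s > 0"
    using s by simp
  then have "d ^ 3 / s < \<epsilon>"
    using s \<open>\<epsilon> > 0\<close> by (simp add: field_simps)
  obtain A where A: "A \<in> unistochastic_gen s" and "\<forall>i j. \<bar>A $ i $ j - B $ i $ j\<bar> \<le> d / s"
    using unistochastic_gen_approximates[OF B \<open>s > 0\<close>] unfolding d_def by blast
  then have "dist A B \<le> d * d * (d / s)"
    unfolding d_def by (intro dist_le_of_entrywise_le) auto
  also have "\<dots> < \<epsilon>"
    using \<open>d ^ 3 / s < \<epsilon>\<close> by (simp add: power3_eq_cube)
  finally show ?thesis
    using A \<open>s > 0\<close> by (auto intro: Suc_leI)
qed

theorem theorem2p8:
  assumes "CARD('d::finite) \<ge> 2"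
  shows "closure (\<Union>s\<in>{1..}. (unistochastic_gen s :: (real^'d^'d) set)) = bistochastic"
proof
  have "unistochastic_gen s \<subseteq> (bistochastic :: (real^'d^'d) set)" if "s \<in> {1..}" for s
    using phi_bistochastic[of s] that unfolding unistochastic_gen_def by auto
  then have "(\<Union>s\<in>{1..}. (unistochastic_gen s :: (real^'d^'d) set)) \<subseteq> bistochastic"
    by blast
  then show "closure (\<Union>s\<in>{1..}. (unistochastic_gen s :: (real^'d^'d) set)) \<subseteq> bistochastic"
    by (rule closure_minimal[OF _ closed_bistochastic])
next
  show "bistochastic \<subseteq> closure (\<Union>s\<in>{1..}. (unistochastic_gen s :: (real^'d^'d) set))"
  proof (intro subsetI iffD2[OF closure_approachable] allI impI)
    fix B :: "real^'d^'d" and \<epsilon> :: real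
    assume "B \<in> bistochastic" "\<epsilon> > 0"
    then obtain s A where "s \<ge> 1" "A \<in> unistochastic_gen s" "dist A B < \<epsilon>"
      using bistochastic_approachable by blast
    then show "\<exists>A\<in>\<Union>s\<in>{1..}. unistochastic_gen s. dist A B < \<epsilon>"
      by auto
  qed
qed

end
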